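(* Let $P,Q,R\in D$ be non-collinear. Identify $S^1$ with $\mathbb{R}/\mathbb{Z}$ via $t\mapsto(\cos2\pi t,\sin2\pi t)$. Let $T_1,T_2\in S^1$ be the endpoints of the chord through $P,Q$, labelled so that $T_1-T_2\in(0,1/2]\bmod 1$; let $T_3\in S^1$ satisfy $2T_3=T_1+T_2\bmod 1$ and $T_3-T_2\in(0,1/2]\bmod1$, and let $T_4=T_3+\frac14\bmod 1$. Use Cartesian coordinates $(x_1,x_2)'$ with respect to the orthonormal basis $\{T_3,T_4\}$ (viewed as unit vectors). Let $u$ be the $x_1$-coordinate of $P$ (equal to that of $Q$), and $k:=e^{d'(P,Q)}$. Put $$A=\frac{2k(k^2+1)(1-u^2)}{(k^2-2ku+1)(k^2+2ku+1)},\quad B=\frac{(k^2+1)\sqrt{1-u^2}}{\sqrt{(k^2-2ku+1)(k^2+2ku+1)}},\quad C=\frac{(k^2-1)^2u}{(k^2-2ku+1)(k^2+2ku+1)},$$ and let $E=\{(x_1,x_2)': \frac{(x_1-C)^2}{A^2}+\frac{x_2^2}{B^2}=1\}$, with $\Phi$ the open region bounded by $E$. Then $E\subset D\cup S^1$ and $E$ is tangent to $S^1$ at $T_1$ and $T_2$. Moreover, if $m$ is the number of triangles inscribed in $S^1$ and circumscribing $\triangle PQR$, then $$m=\begin{cases}0 & \text{if } R\in\Phi,\\ 1 & \text{if } R\in E,\\ 2 & \text{if } R\in D\setminus\overline{\Phi}.\end{cases}$$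
   Context: $D=\{(x,y)\in\mathbb{R}^2: x^2+y^2<1\}$ (Beltrami–Klein disk), $S^1$ its boundary circle. For $P,Q\in D$, let $v_1,v_2\in S^1$ be the endpoints of the chord through $P,Q$; then $d'(P,Q)=\frac12\left|\log\frac{|v_1Q||v_2P|}{|v_1P||v_2Q|}\right|$ (this is the Poincaré-disk distance transported by the map $G^{-1}(x,y)=\left(\frac{x}{1+\sqrt{1-x^2-y^2}},\frac{y}{1+\sqrt{1-x^2-y^2}}\right)$). A triangle inscribed in $S^1$ and circumscribing $\triangle PQR$ is a Euclidean triangle with three distinct vertices on $S^1$ such that $P$, $Q$, $R$ lie on three distinct sides of it (one point on each side). *)

theory Defs
  imports "HOL-Analysis.Analysis"
begin

text \<open>Points of the plane R^2 are represented as complex numbers (x,y) = x + i y.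
  The Beltrami-Klein disk is D = ball 0 1, its boundary circle S^1 = sphere 0 1.\<close>

definition KD :: "complex set" where
  "KD = ball 0 1"

definition S1 :: "complex set" where
  "S1 = sphere 0 1"

definition chord_ends :: "complex \<Rightarrow> complex \<Rightarrow> complex \<Rightarrow> complex \<Rightarrow> bool" where
  "chord_ends P Q v1 v2 \<longleftrightarrow> P \<noteq> Q \<and> v1 \<in> S1 \<and> v2 \<in> S1 \<and> v1 \<noteq> v2 \<and> collinear {v1, v2, P, Q}"

text \<open>The Klein distance d'(P,Q) (formula is symmetric in the labelling of v1, v2).\<close>
definition kdist :: "complex \<Rightarrow> complex \<Rightarrow> real" where
  "kdist P Q = (if P = Q then 0 else
     (let (v1, v2) = (SOME (v1, v2). chord_ends P Q v1 v2)
      in 1/2 * \<bar>ln ((dist v1 Q * dist v2 P) / (dist v1 P * dist v2 Q))\<bar>))"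

definition circ_tri :: "complex \<Rightarrow> complex \<Rightarrow> complex \<Rightarrow> complex set \<Rightarrow> bool" where
  "circ_tri P Q R V \<longleftrightarrow> (\<exists>a b c. V = {a, b, c} \<and> a \<noteq> b \<and> b \<noteq> c \<and> a \<noteq> c \<and>
      a \<in> S1 \<and> b \<in> S1 \<and> c \<in> S1 \<and>
      P \<in> closed_segment b c \<and> Q \<in> closed_segment c a \<and> R \<in> closed_segment a b)"

definition circpt :: "real \<Rightarrow> complex" where
  "circpt t = cis (2 * pi * t)"

definition ellF :: "real \<Rightarrow> real \<Rightarrow> real \<Rightarrow> complex \<Rightarrow> complex \<Rightarrow> complex \<Rightarrow> real" where
  "ellF A B C e3 e4 z = (z \<bullet> e3 - C)\<^sup>2 / A\<^sup>2 + (z \<bullet> e4)\<^sup>2 / B\<^sup>2"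

end

theory Submission
  imports Defs
begin

text \<open>A triangle with vertices a, b, c on the circle and \<open>P \<in> bc\<close>, \<open>Q \<in> ca\<close>, \<open>R \<in> ab\<close> is
  determined by c: a is the far end of the chord from c through Q, b the far end of the chord
  from a through R, and the triangle closes iff b is also the far end of the chord from c
  through P. Each of these chord maps is the Moebius involution \<open>z \<mapsto> (X - z) / (1 - cnj X z)\<close>,
  so after clearing denominators the closing condition is a quadratic equation in c, which on
  the unit circle becomes a real-linear one, \<open>Re (cnj \<beta> c) = - Re \<alpha>\<close>. A line meets the circle
  in 0, 1 or 2 points according to the sign of \<open>\<bar>\<beta>\<bar>\<^sup>2 - (Re \<alpha>)\<^sup>2\<close>.
  In coordinates in which the chord through P and Q is vertical, this discriminant, as a function
  of R, is a positive multiple of \<open>ellF A B C - 1\<close>, with A, B, C read off from the cross ratio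
  \<open>k\<^sup>2\<close> of P, Q and the chord ends.\<close>

section \<open>Chords through a point of the disk\<close>

lemma norm_eq_1_mult_cnj: "cmod z = 1 \<Longrightarrow> z * cnj z = 1"
  by (metis complex_norm_square mult.commute of_real_1 power_one)

lemma mult_cnj_unit_cancel: "cmod \<omega> = 1 \<Longrightarrow> \<omega> * (z * cnj \<omega>) = z"
  using norm_eq_1_mult_cnj[of \<omega>] by (simp add: algebra_simps)

lemma closed_segment_real_param:
  "x \<in> closed_segment c a \<Longrightarrow> \<exists>\<mu>. x = c + complex_of_real \<mu> * (a - c)"
  unfolding in_segment by (auto simp: scaleR_conv_of_real algebra_simps)

lemma collinear_real_param:
  assumes "collinear S" "x \<in> S" "y \<in> S" "x \<noteq> y" "z \<in> S"
  shows "\<exists>l. z = x + complex_of_real l * (y - x)"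
proof -
  obtain o0 v where ov: "\<forall>w\<in>S. \<exists>c. w = o0 + c *\<^sub>R v"
    using assms(1) collinear_alt by blast
  obtain cx cy cz where "x = o0 + cx *\<^sub>R v" "y = o0 + cy *\<^sub>R v" "z = o0 + cz *\<^sub>R v"
    using ov assms by metis
  moreover from this have "cx \<noteq> cy" using assms(4) by auto
  ultimately show ?thesis
    by (intro exI[of _ "(cz - cx) / (cy - cx)"]) (simp add: scaleR_conv_of_real field_simps)
qed

text \<open>For X in the open disk, \<open>z \<mapsto> (X - z) / (1 - cnj X * z)\<close> is the involutive disk
  automorphism exchanging 0 and X. On the unit circle it sends c to the far end of the chord
  from c through X.\<close>
definition chord_opp :: "complex \<Rightarrow> complex \<Rightarrow> complex" where
  "chord_opp X c = (X - c) / (1 - cnj X * c)"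

lemma chord_opp_denom_nonzero:
  assumes "cmod X < 1" "cmod z \<le> 1"
  shows "1 - cnj X * z \<noteq> 0"
proof
  assume "1 - cnj X * z = 0"
  hence "cnj X * z = 1" by simp
  hence "cmod X * cmod z = 1" by (metis complex_mod_cnj norm_mult norm_one)
  moreover have "cmod X * cmod z < 1"
    using assms mult_left_le[of "cmod z" "cmod X"] by simp
  ultimately show False by simp
qed

lemma norm_chord_opp:
  assumes "cmod X < 1" "cmod c = 1"
  shows "cmod (chord_opp X c) = 1"
proof -
  have "1 - cnj X * c = c * cnj (c - X)"
    using norm_eq_1_mult_cnj[OF assms(2)] by (simp add: algebra_simps)
  hence "cmod (1 - cnj X * c) = cmod (X - c)"
    using assms(2) by (simp add: norm_mult) (metis complex_cnj_diff complex_mod_cnj norm_minus_commute)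
  moreover have "X - c \<noteq> 0" using assms by auto
  ultimately show ?thesis by (simp add: chord_opp_def norm_divide)
qed

lemma in_segment_chord_opp:
  assumes X: "cmod X < 1" and c: "cmod c = 1"
  shows "X \<in> closed_segment c (chord_opp X c)"
proof -
  define a where "a = chord_opp X c"
  define d where "d = 1 - cnj X * c"
  define nn where "nn = (cmod (X - c))\<^sup>2"
  define dd where "dd = 2 - 2 * Re (X * cnj c)"
  have cc: "c * cnj c = 1" using norm_eq_1_mult_cnj c by auto
  have d: "d \<noteq> 0" using chord_opp_denom_nonzero X c d_def by auto
  have ad: "a * d = X - c" using d by (simp add: a_def chord_opp_def d_def)
  have "Re (X * cnj c) \<le> cmod (X * cnj c)" by (rule complex_Re_le_cmod)
  also have "\<dots> = cmod X" using c by (simp add: norm_mult)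
  finally have dd_pos: "dd > 0" using X by (simp add: dd_def)
  have "complex_of_real nn = (X - c) * (cnj X - cnj c)"
    unfolding nn_def complex_norm_square by simp
  moreover have "complex_of_real dd = 2 - X * cnj c - cnj X * c"
    by (simp add: dd_def complex_eq_iff)
  ultimately have "((X - c) * complex_of_real dd) * d = (complex_of_real nn * (a - c)) * d"
    using cc ad unfolding d_def by algebra
  hence "(X - c) * complex_of_real dd = complex_of_real nn * (a - c)"
    using d mult_right_cancel by blast
  hence X_eq: "X = (1 - nn/dd) *\<^sub>R c + (nn/dd) *\<^sub>R a"
    using dd_pos by (simp add: scaleR_conv_of_real field_simps)
  have "nn = (cmod X)\<^sup>2 - 2 * (X \<bullet> c) + (cmod c)\<^sup>2"
    by (simp add: nn_def power2_norm_eq_inner inner_diff_left inner_diff_right inner_commute)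
  hence "nn = (cmod X)\<^sup>2 - 2 * Re (X * cnj c) + 1"
    using c by (simp add: inner_complex_def)
  moreover have "(cmod X)\<^sup>2 \<le> 1" using X by (simp add: abs_square_le_1)
  ultimately have "nn \<le> dd" by (simp add: dd_def)
  hence "0 \<le> nn/dd" "nn/dd \<le> 1" using dd_pos by (auto simp: nn_def)
  thus ?thesis unfolding in_segment a_def[symmetric] using X_eq by blast
qed

lemma chord_opp_unique:
  assumes "cmod X < 1" "cmod c = 1" "cmod a = 1"
    and "X = c + complex_of_real \<mu> * (a - c)"
  shows "a = chord_opp X c"
proof -
  have cc: "c * cnj c = 1" "a * cnj a = 1" using norm_eq_1_mult_cnj assms by auto
  have d: "1 - cnj X * c \<noteq> 0" using chord_opp_denom_nonzero assms(1,2) by simp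
  have "a * (1 - (cnj c + \<mu> * (cnj a - cnj c)) * c) = \<mu> * (a - c)" using cc by algebra
  hence "a * (1 - cnj X * c) = X - c" by (simp add: assms(4))
  thus ?thesis using d by (simp add: chord_opp_def field_simps)
qed

lemma chord_opp_neq:
  assumes "cmod X < 1" "cmod c = 1"
  shows "chord_opp X c \<noteq> c"
proof
  assume "chord_opp X c = c"
  hence "X \<in> closed_segment c c" using in_segment_chord_opp[OF assms] by simp
  thus False using assms by simp
qed

lemma chord_opp_chord_opp:
  assumes "cmod X < 1" "cmod c = 1"
  shows "chord_opp X (chord_opp X c) = c"
proof -
  have "X \<in> closed_segment (chord_opp X c) c"
    using in_segment_chord_opp[OF assms] by (simp add: closed_segment_commute)
  then obtain \<mu> where "X = chord_opp X c + complex_of_real \<mu> * (c - chord_opp X c)"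
    using closed_segment_real_param by blast
  thus ?thesis using chord_opp_unique[OF assms(1) norm_chord_opp[OF assms] assms(2)] by simp
qed

lemma chord_ends_chord_opp:
  assumes "chord_ends P Q v1 v2" "cmod P < 1" "cmod Q < 1"
  shows "chord_opp P v1 = v2" "chord_opp Q v1 = v2"
proof -
  have col: "collinear {v1, v2, P, Q}" and v: "cmod v1 = 1" "cmod v2 = 1" "v1 \<noteq> v2"
    using assms(1) by (auto simp: chord_ends_def S1_def)
  show "chord_opp P v1 = v2" "chord_opp Q v1 = v2"
    using collinear_real_param[OF col _ _ v(3), of P] collinear_real_param[OF col _ _ v(3), of Q]
      chord_opp_unique[OF assms(2) v(1,2)] chord_opp_unique[OF assms(3) v(1,2)] by auto
qed

section \<open>Triangles circumscribing PQR\<close>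

definition closing_beta :: "complex \<Rightarrow> complex \<Rightarrow> complex \<Rightarrow> complex" where
  "closing_beta P Q R = P + Q - R - P * Q * cnj R"

definition closing_alpha :: "complex \<Rightarrow> complex \<Rightarrow> complex \<Rightarrow> complex" where
  "closing_alpha P Q R = -1 + R * cnj Q + P * cnj R - P * cnj Q"

definition closing_disc :: "complex \<Rightarrow> complex \<Rightarrow> complex \<Rightarrow> real" where
  "closing_disc P Q R = (cmod (closing_beta P Q R))\<^sup>2 - (Re (closing_alpha P Q R))\<^sup>2"

text \<open>Clearing the three denominators turns the closing condition into
  \<open>\<beta> + 2 Re \<alpha> \<cdot> c + cnj \<beta> \<cdot> c\<^sup>2 = 0\<close>, which on the unit circle is real-linear in c.\<close>
lemma chord_opp_closing_iff:
  assumes P: "cmod P < 1" and Q: "cmod Q < 1" and R: "cmod R < 1" and c: "cmod c = 1"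
  shows "chord_opp R (chord_opp Q c) = chord_opp P c
    \<longleftrightarrow> Re (cnj (closing_beta P Q R) * c) = - Re (closing_alpha P Q R)"
proof -
  define a where "a = chord_opp Q c"
  define dQ where "dQ = 1 - cnj Q * c"
  define dP where "dP = 1 - cnj P * c"
  define dR where "dR = 1 - cnj R * a"
  define \<beta> where "\<beta> = closing_beta P Q R"
  define \<alpha> where "\<alpha> = closing_alpha P Q R"
  have a: "cmod a = 1" using norm_chord_opp[OF Q c] a_def by simp
  have nQ: "dQ \<noteq> 0" and nP: "dP \<noteq> 0" and nR: "dR \<noteq> 0"
    using chord_opp_denom_nonzero P Q R c a by (auto simp: dQ_def dP_def dR_def)
  have ad: "a * dQ = Q - c" using nQ by (simp add: a_def chord_opp_def dQ_def)
  have cc: "c * cnj c = 1" using norm_eq_1_mult_cnj c by auto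
  have "cnj \<beta> = cnj P + cnj Q - cnj R - cnj P * cnj Q * R"
    "cnj \<alpha> = -1 + cnj R * Q + cnj P * R - cnj P * Q"
    by (simp_all add: \<beta>_def \<alpha>_def closing_beta_def closing_alpha_def)
  hence poly: "((R - a) * dP - (P - c) * dR) * dQ = - (\<beta> + (\<alpha> + cnj \<alpha>) * c + cnj \<beta> * c\<^sup>2)"
    using ad unfolding \<beta>_def \<alpha>_def closing_beta_def closing_alpha_def dP_def dR_def dQ_def
    by algebra
  have "cnj c * (\<beta> + (\<alpha> + cnj \<alpha>) * c + cnj \<beta> * c\<^sup>2) = (cnj \<beta> * c + \<beta> * cnj c) + (\<alpha> + cnj \<alpha>)"
    using cc by algebra
  also have "\<dots> = complex_of_real (2 * Re (cnj \<beta> * c) + 2 * Re \<alpha>)"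
    using complex_add_cnj[of "cnj \<beta> * c"] complex_add_cnj[of \<alpha>] by simp
  finally have lin: "cnj c * (\<beta> + (\<alpha> + cnj \<alpha>) * c + cnj \<beta> * c\<^sup>2)
      = complex_of_real (2 * Re (cnj \<beta> * c) + 2 * Re \<alpha>)" .
  have "chord_opp R a = chord_opp P c \<longleftrightarrow> (R - a) * dP = (P - c) * dR"
    using nR nP by (simp add: chord_opp_def dR_def dP_def frac_eq_eq)
  also have "\<dots> \<longleftrightarrow> \<beta> + (\<alpha> + cnj \<alpha>) * c + cnj \<beta> * c\<^sup>2 = 0"
    using nQ poly by (metis eq_iff_diff_eq_0 mult_eq_0_iff neg_equal_0_iff_equal)
  also have "\<dots> \<longleftrightarrow> 2 * Re (cnj \<beta> * c) + 2 * Re \<alpha> = 0"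
    using lin cc by (metis mult_eq_0_iff mult_zero_left of_real_eq_0_iff zero_neq_one)
  finally show ?thesis unfolding a_def \<beta>_def \<alpha>_def by linarith
qed

definition closing_triangle :: "complex \<Rightarrow> complex \<Rightarrow> complex \<Rightarrow> complex set" where
  "closing_triangle Q R c = {chord_opp Q c, chord_opp R (chord_opp Q c), c}"

definition closing_points :: "complex \<Rightarrow> complex \<Rightarrow> complex \<Rightarrow> complex set" where
  "closing_points P Q R = {c. cmod c = 1 \<and> chord_opp R (chord_opp Q c) = chord_opp P c}"

lemma circ_tri_closing_point:
  assumes P: "cmod P < 1" and Q: "cmod Q < 1" and R: "cmod R < 1"
  shows "circ_tri P Q R V \<longleftrightarrow>
    (\<exists>c\<in>closing_points P Q R. V = closing_triangle Q R c)"
proof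
  assume "circ_tri P Q R V"
  then obtain a b c where V: "V = {a, b, c}"
    and on: "cmod a = 1" "cmod b = 1" "cmod c = 1"
    and sP: "P \<in> closed_segment c b" and sQ: "Q \<in> closed_segment c a" and sR: "R \<in> closed_segment a b"
    by (auto simp: circ_tri_def S1_def closed_segment_commute)
  have a: "a = chord_opp Q c"
    using closed_segment_real_param[OF sQ] chord_opp_unique[OF Q on(3) on(1)] by blast
  have b: "b = chord_opp R a"
    using closed_segment_real_param[OF sR] chord_opp_unique[OF R on(1) on(2)] by blast
  have "b = chord_opp P c"
    using closed_segment_real_param[OF sP] chord_opp_unique[OF P on(3) on(2)] by blast
  thus "\<exists>c\<in>closing_points P Q R. V = closing_triangle Q R c"
    using V a b on by (auto simp: closing_points_def closing_triangle_def)
next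
  assume "\<exists>c\<in>closing_points P Q R. V = closing_triangle Q R c"
  then obtain c where V: "V = {chord_opp Q c, chord_opp R (chord_opp Q c), c}"
    and c: "cmod c = 1" and closing: "chord_opp R (chord_opp Q c) = chord_opp P c"
    by (auto simp: closing_points_def closing_triangle_def)
  define a where "a = chord_opp Q c"
  define b where "b = chord_opp R a"
  have a1: "cmod a = 1" using norm_chord_opp[OF Q c] a_def by simp
  have b1: "cmod b = 1" using norm_chord_opp[OF R a1] b_def by simp
  have bP: "b = chord_opp P c" using closing by (simp add: a_def b_def)
  have "a \<noteq> c" "b \<noteq> a" "b \<noteq> c"
    using chord_opp_neq[OF Q c] chord_opp_neq[OF R a1] chord_opp_neq[OF P c] a_def b_def bP by auto
  moreover have "Q \<in> closed_segment c a" "R \<in> closed_segment a b"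
    using in_segment_chord_opp[OF Q c] in_segment_chord_opp[OF R a1] by (simp_all add: a_def b_def)
  moreover have "P \<in> closed_segment b c"
    using in_segment_chord_opp[OF P c] bP by (simp add: closed_segment_commute)
  ultimately show "circ_tri P Q R V"
    unfolding circ_tri_def S1_def V a_def[symmetric] b_def[symmetric]
    using a1 b1 c by (intro exI[of _ a] exI[of _ b] exI[of _ c]) auto
qed

text \<open>A vertex set determines its closing point c: the other two candidates a, b would force
  a degenerate triangle, since each of \<open>chord_opp P\<close>, \<open>chord_opp Q\<close>, \<open>chord_opp R\<close> is an involution.\<close>
lemma inj_on_closing_triangle:
  assumes P: "cmod P < 1" and Q: "cmod Q < 1" and R: "cmod R < 1"
  shows "inj_on (closing_triangle Q R) (closing_points P Q R)"
proof (rule inj_onI)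
  fix c1 c2 assume c1: "c1 \<in> closing_points P Q R" and c2: "c2 \<in> closing_points P Q R"
    and eq: "closing_triangle Q R c1 = closing_triangle Q R c2"
  define a1 where "a1 = chord_opp Q c1"
  define b1 where "b1 = chord_opp R a1"
  define a2 where "a2 = chord_opp Q c2"
  define b2 where "b2 = chord_opp R a2"
  have u1: "cmod c1 = 1" and u2: "cmod c2 = 1"
    and bp1: "b1 = chord_opp P c1" and bp2: "b2 = chord_opp P c2"
    using c1 c2 by (auto simp: closing_points_def a1_def b1_def a2_def b2_def)
  have ua1: "cmod a1 = 1" and ua2: "cmod a2 = 1"
    using norm_chord_opp[OF Q u1] norm_chord_opp[OF Q u2] a1_def a2_def by simp_all
  have V: "{a1, b1, c1} = {a2, b2, c2}"
    using eq by (simp add: closing_triangle_def a1_def b1_def a2_def b2_def)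
  have n1: "a1 \<noteq> c1" "b1 \<noteq> a1" "b1 \<noteq> c1"
    using chord_opp_neq[OF Q u1] chord_opp_neq[OF R ua1] chord_opp_neq[OF P u1] a1_def b1_def bp1
    by auto
  have n2: "a2 \<noteq> c2" "b2 \<noteq> a2" "b2 \<noteq> c2"
    using chord_opp_neq[OF Q u2] chord_opp_neq[OF R ua2] chord_opp_neq[OF P u2] a2_def b2_def bp2
    by auto
  have qa1: "chord_opp Q a1 = c1" and pb1: "chord_opp P b1 = c1"
    using chord_opp_chord_opp[OF Q u1] chord_opp_chord_opp[OF P u1] a1_def bp1 by simp_all
  show "c1 = c2"
  proof (rule ccontr)
    assume ne: "c1 \<noteq> c2"
    hence "c2 = a1 \<or> c2 = b1" using V by auto
    thus False
    proof
      assume "c2 = a1"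
      hence "a2 = c1" "b2 \<noteq> c1" "b2 \<noteq> a1" using qa1 n2 a2_def by auto
      hence "b2 = b1" using V by auto
      hence "c1 = a1"
        using \<open>a2 = c1\<close> chord_opp_chord_opp[OF R u1] chord_opp_chord_opp[OF R ua1] b1_def b2_def
        by metis
      thus False using n1 by simp
    next
      assume "c2 = b1"
      hence "b2 = c1" "a2 \<noteq> b1" "a2 \<noteq> c1" using bp2 pb1 n2 by auto
      hence "a2 = a1" using V by auto
      hence "c2 = c1"
        using chord_opp_chord_opp[OF Q u1] chord_opp_chord_opp[OF Q u2] a1_def a2_def by metis
      thus False using ne by simp
    qed
  qed
qed

lemma bij_betw_closing_points_circ_tri:
  assumes "cmod P < 1" "cmod Q < 1" "cmod R < 1"
  shows "bij_betw (closing_triangle Q R)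
    (closing_points P Q R) {V. circ_tri P Q R V}"
  using inj_on_closing_triangle[OF assms] circ_tri_closing_point[OF assms]
  by (auto simp: bij_betw_def)

lemma unit_circle_inter_line:
  fixes b :: complex and h :: real
  assumes "b \<noteq> 0"
  shows "{c. cmod c = 1 \<and> Re (cnj b * c) = h} =
    (if h\<^sup>2 \<le> (cmod b)\<^sup>2
     then (\<lambda>t. b * Complex h t / (cmod b)\<^sup>2) ` {sqrt ((cmod b)\<^sup>2 - h\<^sup>2), - sqrt ((cmod b)\<^sup>2 - h\<^sup>2)}
     else {})"
proof -
  have nb: "complex_of_real ((cmod b)\<^sup>2) \<noteq> 0" using assms by simp
  have bb: "cnj b * b = complex_of_real ((cmod b)\<^sup>2)" by (metis complex_norm_square mult.commute)
  have c_eq: "c = b * (cnj b * c) / (cmod b)\<^sup>2" for c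
    using nb by (simp add: bb mult.assoc[symmetric] mult.commute[of b])
  have cancel: "cnj b * (b * w / (cmod b)\<^sup>2) = w" for w
    using nb by (simp add: bb mult.assoc[symmetric])
  have on_line_iff: "cmod c = 1 \<and> Re (cnj b * c) = h \<longleftrightarrow>
      (\<exists>t. t\<^sup>2 = (cmod b)\<^sup>2 - h\<^sup>2 \<and> c = b * Complex h t / (cmod b)\<^sup>2)" for c
  proof -
    have "cmod c = 1 \<longleftrightarrow> (cmod (cnj b * c))\<^sup>2 = (cmod b)\<^sup>2"
      using assms by (simp add: norm_mult power_mult_distrib abs_square_eq_1)
    hence unit: "cmod c = 1 \<longleftrightarrow> (Re (cnj b * c))\<^sup>2 + (Im (cnj b * c))\<^sup>2 = (cmod b)\<^sup>2"
      by (simp add: cmod_power2)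
    show ?thesis
    proof
      assume "cmod c = 1 \<and> Re (cnj b * c) = h"
      hence "(Im (cnj b * c))\<^sup>2 = (cmod b)\<^sup>2 - h\<^sup>2" "cnj b * c = Complex h (Im (cnj b * c))"
        using unit by (auto simp: complex_eq_iff)
      thus "\<exists>t. t\<^sup>2 = (cmod b)\<^sup>2 - h\<^sup>2 \<and> c = b * Complex h t / (cmod b)\<^sup>2"
        using c_eq[of c] by metis
    next
      assume "\<exists>t. t\<^sup>2 = (cmod b)\<^sup>2 - h\<^sup>2 \<and> c = b * Complex h t / (cmod b)\<^sup>2"
      then obtain t where t: "t\<^sup>2 = (cmod b)\<^sup>2 - h\<^sup>2" and "c = b * Complex h t / (cmod b)\<^sup>2"
        by blast
      hence "cnj b * c = Complex h t" using cancel by simp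
      thus "cmod c = 1 \<and> Re (cnj b * c) = h" using unit t by simp
    qed
  qed
  have "t\<^sup>2 = (cmod b)\<^sup>2 - h\<^sup>2 \<longleftrightarrow> h\<^sup>2 \<le> (cmod b)\<^sup>2 \<and>
      t \<in> {sqrt ((cmod b)\<^sup>2 - h\<^sup>2), - sqrt ((cmod b)\<^sup>2 - h\<^sup>2)}" for t
    by (smt (verit) insert_iff power2_eq_iff real_sqrt_pow2 real_sqrt_pow2_iff singletonD zero_le_power2)
  thus ?thesis unfolding on_line_iff by auto
qed

lemma card_closing_points:
  assumes P: "cmod P < 1" and Q: "cmod Q < 1" and R: "cmod R < 1"
    and chord: "chord_ends P Q v1 v2"
  shows "closing_disc P Q R < 0 \<Longrightarrow> closing_points P Q R = {}"
    and "closing_disc P Q R = 0 \<Longrightarrow> finite (closing_points P Q R) \<and> card (closing_points P Q R) = 1"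
    and "closing_disc P Q R > 0 \<Longrightarrow> finite (closing_points P Q R) \<and> card (closing_points P Q R) = 2"
proof -
  define b where "b = closing_beta P Q R"
  define h where "h = - Re (closing_alpha P Q R)"
  define t where "t = sqrt ((cmod b)\<^sup>2 - h\<^sup>2)"
  have disc: "closing_disc P Q R = (cmod b)\<^sup>2 - h\<^sup>2" by (simp add: closing_disc_def b_def h_def)
  have "c \<in> closing_points P Q R \<longleftrightarrow> cmod c = 1 \<and> Re (cnj b * c) = h" for c
    unfolding closing_points_def b_def h_def using chord_opp_closing_iff[OF P Q R, of c] by blast
  hence pts: "closing_points P Q R = {c. cmod c = 1 \<and> Re (cnj b * c) = h}" by blast
  have v: "cmod v1 = 1" "cmod v2 = 1" using chord by (auto simp: chord_ends_def S1_def)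
  text \<open>The line is not degenerate: the chord end v1 is sent to v2 by both \<open>chord_opp P\<close> and
    \<open>chord_opp Q\<close>, and \<open>chord_opp R\<close> has no fixed point, so v1 is not a closing point.\<close>
  have "v1 \<notin> closing_points P Q R"
    using chord_ends_chord_opp[OF chord P Q] chord_opp_neq[OF R v(2)] by (simp add: closing_points_def)
  hence bh: "b \<noteq> 0 \<or> h \<noteq> 0" using pts v(1) by force
  have "closing_points P Q R = {}" if "(cmod b)\<^sup>2 < h\<^sup>2"
  proof (cases "b = 0")
    case True
    hence "h \<noteq> 0" using that by simp
    thus ?thesis using pts True by simp
  next
    case False thus ?thesis using pts that unit_circle_inter_line[of b h] by simp
  qed
  moreover have "finite (closing_points P Q R) \<and> card (closing_points P Q R) = card {t, - t}"
    if "(cmod b)\<^sup>2 \<ge> h\<^sup>2"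
  proof -
    have "b \<noteq> 0" using bh that by auto
    hence "inj (\<lambda>t. b * Complex h t / (cmod b)\<^sup>2)"
      by (intro injI) simp
    moreover have "closing_points P Q R = (\<lambda>t. b * Complex h t / (cmod b)\<^sup>2) ` {t, - t}"
      using pts that unit_circle_inter_line[OF \<open>b \<noteq> 0\<close>, of h] by (simp add: t_def)
    ultimately show ?thesis
      by (metis card_image finite.emptyI finite_imageI finite_insert inj_on_subset subset_UNIV)
  qed
  moreover have "card {t, - t} = (if t = 0 then 1 else 2)" by auto
  moreover have "(cmod b)\<^sup>2 = h\<^sup>2 \<longleftrightarrow> t = 0" "(cmod b)\<^sup>2 > h\<^sup>2 \<Longrightarrow> t \<noteq> 0"
    by (auto simp: t_def)
  ultimately show "closing_disc P Q R < 0 \<Longrightarrow> closing_points P Q R = {}"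
    and "closing_disc P Q R = 0 \<Longrightarrow> finite (closing_points P Q R) \<and> card (closing_points P Q R) = 1"
    and "closing_disc P Q R > 0 \<Longrightarrow> finite (closing_points P Q R) \<and> card (closing_points P Q R) = 2"
    unfolding disc by auto
qed

corollary card_circ_tri_by_closing_disc:
  assumes "cmod P < 1" "cmod Q < 1" "cmod R < 1" "chord_ends P Q v1 v2"
  shows "closing_disc P Q R < 0 \<Longrightarrow> {V. circ_tri P Q R V} = {}"
    and "closing_disc P Q R = 0 \<Longrightarrow> finite {V. circ_tri P Q R V} \<and> card {V. circ_tri P Q R V} = 1"
    and "closing_disc P Q R > 0 \<Longrightarrow> finite {V. circ_tri P Q R V} \<and> card {V. circ_tri P Q R V} = 2"
  using card_closing_points[OF assms] bij_betw_closing_points_circ_tri[OF assms(1-3)]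
  by (auto simp: bij_betw_finite bij_betw_same_card dest: bij_betw_imp_surj_on)

section \<open>Coordinates adapted to the chord through P and Q\<close>

lemma circpt_add_of_int: "circpt (a + b + of_int n) = circpt a * cis (2 * pi * b)"
  by (simp add: circpt_def distrib_left flip: cis_mult)

lemma circpt_chord_labels:
  assumes lab12: "frac (t1 - t2) \<in> {0<..1/2}"
    and mid3: "frac (2 * t3 - (t1 + t2)) = 0"
    and lab3: "frac (t3 - t2) \<in> {0<..1/2}"
    and t4: "t4 = t3 + 1/4"
  obtains d where "0 < d" "d \<le> 1/2" "circpt t1 = circpt t3 * cis (pi * d)"
    "circpt t2 = circpt t3 * cis (- (pi * d))" "circpt t4 = circpt t3 * \<i>"
proof -
  define d where "d = frac (t1 - t2)"
  define e where "e = frac (t3 - t2)"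
  define n1 where "n1 = \<lfloor>t1 - t2\<rfloor>"
  define n3 where "n3 = \<lfloor>t3 - t2\<rfloor>"
  have d: "t1 - t2 = d + n1" and e: "t3 - t2 = e + n3"
    by (simp_all add: d_def e_def n1_def n3_def frac_def)
  define m where "m = \<lfloor>2 * t3 - (t1 + t2)\<rfloor>"
  have "2 * t3 - (t1 + t2) = m" using mid3 by (simp add: frac_def m_def)
  hence z: "2 * e - d = of_int (n1 + m - 2 * n3)" using d e by simp
  have bounds: "0 < d" "d \<le> 1/2" "0 < e" "e \<le> 1/2" using lab12 lab3 by (auto simp: d_def e_def)
  text \<open>\<open>2e - d\<close> is an integer in \<open>(-1, 1)\<close>, so t3 is the midpoint of the shorter arc.\<close>
  hence "of_int (n1 + m - 2 * n3) < (1::real)" "of_int (n1 + m - 2 * n3) > (-1::real)"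
    using z by linarith+
  hence "n1 + m - 2 * n3 = 0" by linarith
  hence ed: "e = d / 2" using z by simp
  have "circpt t1 = circpt (t3 + d/2 + of_int (n1 - n3))" using d e ed by (simp add: algebra_simps)
  hence "circpt t1 = circpt t3 * cis (pi * d)" by (simp only: circpt_add_of_int) simp
  moreover have "circpt t2 = circpt (t3 + (- d/2) + of_int (- n3))" using e ed by (simp add: algebra_simps)
  hence "circpt t2 = circpt t3 * cis (- (pi * d))" by (simp only: circpt_add_of_int) simp
  moreover have "circpt t4 = circpt (t3 + 1/4 + of_int 0)" using t4 by simp
  hence "circpt t4 = circpt t3 * \<i>" by (simp only: circpt_add_of_int) (simp add: cis.code complex_eq_iff)
  ultimately show ?thesis using that bounds by blast
qed

lemma inner_unit_frame: "z \<bullet> \<omega> = Re (z * cnj \<omega>)" "z \<bullet> (\<omega> * \<i>) = Im (z * cnj \<omega>)"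
  by (simp_all add: inner_complex_def algebra_simps)

lemma unit_frame_coords: "cmod \<omega> = 1 \<Longrightarrow> z = \<omega> * Complex (Re (z * cnj \<omega>)) (Im (z * cnj \<omega>))"
  by (metis complex_surj mult_cnj_unit_cancel)

lemma norm_unit_frame: "cmod \<omega> = 1 \<Longrightarrow> cmod (\<omega> * Complex x y) = sqrt (x\<^sup>2 + y\<^sup>2)"
  by (simp add: norm_mult complex_norm)

lemma collinear_unit_frame_line: "collinear ((\<lambda>y. \<omega> * Complex u y) ` Y)"
  unfolding collinear_alt
  by (rule exI[of _ "\<omega> * u"], rule exI[of _ "\<omega> * \<i>"])
     (auto simp: scaleR_conv_of_real complex_eq_iff algebra_simps)

text \<open>Coordinates adapted to the chord: after rotating by \<open>cnj \<omega>\<close> the chord is the vertical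
  line \<open>Re = u\<close>, with ends \<open>u \<plusminus> i s\<close>, and P, Q are \<open>u + i p\<close>, \<open>u + i q\<close>.\<close>
locale chord_frame =
  fixes \<omega> :: complex and u s p q :: real
  assumes norm_\<omega>: "cmod \<omega> = 1" and s_pos: "0 < s" and u_s: "u\<^sup>2 + s\<^sup>2 = 1"
    and p_lt: "\<bar>p\<bar> < s" and q_lt: "\<bar>q\<bar> < s" and p_neq_q: "p \<noteq> q"

lemma chord_frame_of_chord_ends:
  assumes \<omega>: "cmod \<omega> = 1" and s: "0 < s" and us: "u\<^sup>2 + s\<^sup>2 = 1"
    and P: "cmod P < 1" and Q: "cmod Q < 1"
    and chord: "chord_ends P Q (\<omega> * Complex u s) (\<omega> * Complex u (- s))"
  obtains p q where "chord_frame \<omega> u s p q" "P = \<omega> * Complex u p" "Q = \<omega> * Complex u q"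
proof -
  define T1 where "T1 = \<omega> * Complex u s"
  define T2 where "T2 = \<omega> * Complex u (- s)"
  have col: "collinear {T1, T2, P, Q}" and PQ: "P \<noteq> Q" and T12: "T1 \<noteq> T2"
    using chord by (auto simp: chord_ends_def T1_def T2_def)
  have on_chord: "\<exists>y. X = \<omega> * Complex u y \<and> \<bar>y\<bar> < s" if "X \<in> {P, Q}" for X
  proof -
    have "\<exists>l. X = T1 + complex_of_real l * (T2 - T1)"
      by (rule collinear_real_param[OF col _ _ T12]) (use that in auto)
    then obtain l where "X = T1 + complex_of_real l * (T2 - T1)" ..
    hence X: "X = \<omega> * Complex u (s * (1 - 2 * l))"
      by (simp add: T1_def T2_def complex_eq_iff algebra_simps)
    have "cmod X < 1" using that P Q by auto
    hence "(s * (1 - 2 * l))\<^sup>2 < s\<^sup>2"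
      using us by (simp add: X norm_unit_frame[OF \<omega>] real_sqrt_lt_1_iff)
    hence "\<bar>s * (1 - 2 * l)\<bar> < s" using s by (simp add: power2_less_imp_less abs_square_less_1)
    thus ?thesis using X by blast
  qed
  obtain p q where "P = \<omega> * Complex u p" "\<bar>p\<bar> < s" "Q = \<omega> * Complex u q" "\<bar>q\<bar> < s"
    using on_chord[of P] on_chord[of Q] by auto
  moreover from this have "p \<noteq> q" using PQ by auto
  ultimately show ?thesis using that \<omega> s us by (simp add: chord_frame_def)
qed

context chord_frame
begin

lemma chord_ends_frame: "chord_ends (\<omega> * Complex u p) (\<omega> * Complex u q) (\<omega> * Complex u s) (\<omega> * Complex u (- s))"
proof -
  have "collinear ((\<lambda>y. \<omega> * Complex u y) ` {s, - s, p, q})" by (rule collinear_unit_frame_line)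
  moreover have "cmod (\<omega> * Complex u y) = 1" if "y\<^sup>2 = s\<^sup>2" for y
    using u_s that by (simp add: norm_unit_frame[OF norm_\<omega>])
  ultimately show ?thesis
    using norm_\<omega> s_pos p_neq_q by (auto simp: chord_ends_def S1_def)
qed

lemma dist_frame: "dist (\<omega> * Complex u a) (\<omega> * Complex u b) = \<bar>a - b\<bar>"
proof -
  have "\<omega> * Complex u a - \<omega> * Complex u b = \<omega> * Complex 0 (a - b)"
    by (simp add: complex_eq_iff algebra_simps)
  thus ?thesis by (simp add: dist_norm norm_unit_frame[OF norm_\<omega>])
qed

lemma chord_ends_frame_unique:
  assumes cv: "chord_ends (\<omega> * Complex u p) (\<omega> * Complex u q) v1 v2"
  shows "{v1, v2} = {\<omega> * Complex u s, \<omega> * Complex u (- s)}"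
proof -
  have "v \<in> {\<omega> * Complex u s, \<omega> * Complex u (- s)}" if v: "v \<in> {v1, v2}" for v
  proof -
    have "collinear {v1, v2, \<omega> * Complex u p, \<omega> * Complex u q}" "cmod v = 1"
      and pq: "\<omega> * Complex u p \<noteq> \<omega> * Complex u q"
      using cv v by (auto simp: chord_ends_def S1_def)
    then obtain l where "v = \<omega> * Complex u p + complex_of_real l * (\<omega> * Complex u q - \<omega> * Complex u p)"
      using collinear_real_param[OF _ _ _ pq, of _ v] v by auto
    hence "v = \<omega> * Complex u (p + l * (q - p))"
      by (simp add: complex_eq_iff algebra_simps)
    moreover from this have "u\<^sup>2 + (p + l * (q - p))\<^sup>2 = 1"
      using \<open>cmod v = 1\<close> by (simp add: norm_unit_frame[OF norm_\<omega>])
    hence "p + l * (q - p) = s \<or> p + l * (q - p) = - s"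
      using u_s s_pos by (metis add_left_cancel power2_eq_iff)
    ultimately show ?thesis by auto
  qed
  moreover have "v1 \<noteq> v2" using cv by (simp add: chord_ends_def)
  moreover have "\<omega> * Complex u s \<noteq> \<omega> * Complex u (- s)" using s_pos norm_\<omega> by auto
  ultimately show ?thesis by auto
qed

lemma kdist_frame:
  "kdist (\<omega> * Complex u p) (\<omega> * Complex u q) = 1/2 * \<bar>ln ((s - q) * (s + p) / ((s - p) * (s + q)))\<bar>"
proof -
  define P where "P = \<omega> * Complex u p"
  define Q where "Q = \<omega> * Complex u q"
  define T1 where "T1 = \<omega> * Complex u s"
  define T2 where "T2 = \<omega> * Complex u (- s)"
  define \<rho> where "\<rho> = (s - q) * (s + p) / ((s - p) * (s + q))"
  have dists: "dist T1 Q = s - q" "dist T2 Q = s + q" "dist T1 P = s - p" "dist T2 P = s + p"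
    using dist_frame p_lt q_lt by (auto simp: T1_def T2_def P_def Q_def)
  obtain v1 v2 where pr: "(SOME (v1, v2). chord_ends P Q v1 v2) = (v1, v2)"
    and cv: "chord_ends P Q v1 v2"
    using someI_ex[of "\<lambda>(v1, v2). chord_ends P Q v1 v2"] chord_ends_frame
    by (metis (mono_tags, lifting) P_def Q_def case_prodE case_prodI)
  have "P \<noteq> Q" using cv by (simp add: chord_ends_def)
  hence kd: "kdist P Q = 1/2 * \<bar>ln ((dist v1 Q * dist v2 P) / (dist v1 P * dist v2 Q))\<bar>"
    unfolding kdist_def using pr by simp
  have "(v1 = T1 \<and> v2 = T2) \<or> (v1 = T2 \<and> v2 = T1)"
    using chord_ends_frame_unique cv by (auto simp: doubleton_eq_iff P_def Q_def T1_def T2_def)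
  thus ?thesis
  proof
    assume "v1 = T1 \<and> v2 = T2"
    thus ?thesis using kd dists by (simp add: P_def Q_def)
  next
    assume "v1 = T2 \<and> v2 = T1"
    hence "kdist P Q = 1/2 * \<bar>ln ((s + q) * (s - p) / ((s + p) * (s - q)))\<bar>"
      using kd dists by simp
    also have "(s + q) * (s - p) / ((s + p) * (s - q)) = inverse \<rho>"
      by (simp add: \<rho>_def mult.commute)
    also have "\<rho> > 0" using p_lt q_lt by (simp add: \<rho>_def)
    hence "\<bar>ln (inverse \<rho>)\<bar> = \<bar>ln \<rho>\<bar>" by (simp add: ln_inverse)
    finally show ?thesis by (simp add: \<rho>_def P_def Q_def)
  qed
qed

end

section \<open>The ellipse\<close>

lemma closing_disc_vertical:
  "closing_disc (Complex u p) (Complex u q) (Complex x y) =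
     (2 * u - x - ((u * u - p * q) * x + (u * q + p * u) * y))\<^sup>2 +
      (p + q - y - ((u * q + p * u) * x - (u * u - p * q) * y))\<^sup>2 -
      (2 * (u * x) + (y * q + (p * y - 1)) - (u * u + p * q))\<^sup>2"
  by (simp add: closing_disc_def closing_beta_def closing_alpha_def cmod_power2 algebra_simps)

lemma closing_disc_rotate:
  assumes "cmod \<omega> = 1"
  shows "closing_disc (\<omega> * a) (\<omega> * b) (\<omega> * c) = closing_disc a b c"
proof -
  have w: "\<omega> * cnj \<omega> = 1" using norm_eq_1_mult_cnj assms by auto
  have "closing_beta (\<omega> * a) (\<omega> * b) (\<omega> * c) = \<omega> * closing_beta a b c"
    unfolding closing_beta_def using w by simp algebra
  moreover have "closing_alpha (\<omega> * a) (\<omega> * b) (\<omega> * c) = closing_alpha a b c"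
    unfolding closing_alpha_def using w by simp algebra
  ultimately show ?thesis using assms by (simp add: closing_disc_def norm_mult)
qed

lemma ellF_unit_frame:
  "ellF A B C \<omega> (\<omega> * \<i>) z = (Re (z * cnj \<omega>) - C)\<^sup>2 / A\<^sup>2 + (Im (z * cnj \<omega>))\<^sup>2 / B\<^sup>2"
  by (simp add: ellF_def inner_unit_frame)

text \<open>Along the ray from the centre \<open>\<omega> C\<close> through z, ellF grows like the square of the
  parameter, so every point of the level set 1 is a limit of points inside.\<close>
lemma ellF_level_in_closure:
  assumes \<omega>: "cmod \<omega> = 1" and z: "ellF A B C \<omega> (\<omega> * \<i>) z = 1"
  shows "z \<in> closure {z. ellF A B C \<omega> (\<omega> * \<i>) z < 1}"
proof -
  define f where "f t = \<omega> * of_real C + of_real t * (z - \<omega> * of_real C)" for t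
  have scale: "ellF A B C \<omega> (\<omega> * \<i>) (f t) = t\<^sup>2 * ellF A B C \<omega> (\<omega> * \<i>) z" for t
  proof -
    define g h where "g = f t * cnj \<omega>" and "h = z * cnj \<omega>"
    have g: "g = of_real C + of_real t * (h - of_real C)"
      using norm_eq_1_mult_cnj[OF \<omega>] unfolding f_def g_def h_def by algebra
    have "Re g - C = t * (Re h - C)" "Im g = t * Im h" by (simp_all add: g algebra_simps)
    thus ?thesis unfolding ellF_unit_frame g_def[symmetric] h_def[symmetric]
      by (simp add: power_mult_distrib distrib_left)
  qed
  have "f ` {0..<1} \<subseteq> {z. ellF A B C \<omega> (\<omega> * \<i>) z < 1}"
  proof (rule image_subsetI)
    fix t :: real assume "t \<in> {0..<1}"
    hence "t\<^sup>2 < 1" by (simp add: abs_square_less_1)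
    thus "f t \<in> {z. ellF A B C \<omega> (\<omega> * \<i>) z < 1}" using scale[of t] z by simp
  qed
  hence "f ` {0..<1} \<subseteq> closure {z. ellF A B C \<omega> (\<omega> * \<i>) z < 1}"
    using closure_subset by blast
  moreover have "continuous_on (closure {0..<1}) f" unfolding f_def by (intro continuous_intros)
  ultimately have "f ` closure {0..<1} \<subseteq> closure {z. ellF A B C \<omega> (\<omega> * \<i>) z < 1}"
    by (intro image_closure_subset) auto
  moreover have "f 1 = z" by (simp add: f_def)
  ultimately show ?thesis by (auto simp: closure_atLeastLessThan)
qed

text \<open>The gradient of ellF at a point \<open>\<omega>(x + i y)\<close> is \<open>2((x - C)/A\<^sup>2, y/B\<^sup>2)\<close>, which is radial
  (hence the level curve is tangent to the circle there) exactly when \<open>(x - C)/A\<^sup>2 = x/B\<^sup>2\<close>.\<close>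
lemma ellF_has_derivative_radial:
  assumes key: "(x - C) / A\<^sup>2 = x / B\<^sup>2" and \<omega>: "cmod \<omega> = 1"
  shows "(ellF A B C \<omega> (\<omega> * \<i>) has_derivative (\<lambda>h. 2 / B\<^sup>2 * ((\<omega> * Complex x y) \<bullet> h)))
    (at (\<omega> * Complex x y))"
proof -
  define T where "T = \<omega> * Complex x y"
  have "ellF A B C \<omega> (\<omega> * \<i>) = (\<lambda>z. inverse (A\<^sup>2) * (z \<bullet> \<omega> - C)\<^sup>2 + inverse (B\<^sup>2) * (z \<bullet> (\<omega> * \<i>))\<^sup>2)"
    by (simp add: ellF_def fun_eq_iff field_simps)
  moreover have "((\<lambda>z. inverse (A\<^sup>2) * (z \<bullet> \<omega> - C)\<^sup>2 + inverse (B\<^sup>2) * (z \<bullet> (\<omega> * \<i>))\<^sup>2) has_derivative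
     (\<lambda>h. inverse (A\<^sup>2) * (2 * (T \<bullet> \<omega> - C) * (h \<bullet> \<omega>)) + inverse (B\<^sup>2) * (2 * (T \<bullet> (\<omega> * \<i>)) * (h \<bullet> (\<omega> * \<i>))))) (at T)"
    by (auto intro!: derivative_eq_intros simp: fun_eq_iff algebra_simps)
  moreover have "T \<bullet> \<omega> = x" "T \<bullet> (\<omega> * \<i>) = y"
    using norm_eq_1_mult_cnj[OF \<omega>] by (simp_all add: T_def inner_unit_frame mult.commute[of \<omega>] mult.assoc)
  moreover have "T \<bullet> h = x * (h \<bullet> \<omega>) + y * (h \<bullet> (\<omega> * \<i>))" for h
    by (simp add: T_def inner_complex_def algebra_simps)
  moreover have "inverse (A\<^sup>2) * (2 * (x - C) * a) + inverse (B\<^sup>2) * (2 * y * b) = 2 / B\<^sup>2 * (x * a + y * b)"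
    for a b
  proof -
    have "inverse (A\<^sup>2) * (2 * (x - C) * a) = 2 * a * ((x - C) / A\<^sup>2)"
      by (simp add: divide_inverse ac_simps)
    also have "\<dots> = 2 * a * (x / B\<^sup>2)" by (simp only: key)
    finally show ?thesis by (simp add: divide_inverse algebra_simps)
  qed
  ultimately show ?thesis unfolding T_def[symmetric] by (simp only:)
qed

context chord_frame
begin

definition d0 :: real where "d0 = (s\<^sup>2 - p\<^sup>2) * (s\<^sup>2 - q\<^sup>2)"
definition e :: real where "e = (p - q)\<^sup>2"
definition G :: real where "G = d0 + e"
definition w :: real where "w = s\<^sup>2 - p * q"

lemma sq_lt_s_sq: "p\<^sup>2 < s\<^sup>2" "q\<^sup>2 < s\<^sup>2"
  using p_lt q_lt by (metis abs_ge_zero power2_abs power_strict_mono zero_less_numeral)+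

lemma d0_pos: "d0 > 0"
  using sq_lt_s_sq by (simp add: d0_def)

lemma G_pos: "G > 0"
  using d0_pos by (simp add: G_def e_def add_pos_nonneg)

lemma w_pos: "w > 0"
proof -
  have "\<bar>p * q\<bar> < s * s" using p_lt q_lt by (simp add: abs_mult mult_strict_mono')
  thus ?thesis by (simp add: w_def power2_eq_square)
qed

lemma w_sq: "w\<^sup>2 = s\<^sup>2 * e + d0"
  by (simp add: w_def e_def d0_def power2_eq_square algebra_simps)

definition ell_quad :: "real \<Rightarrow> real \<Rightarrow> real" where
  "ell_quad x y = G\<^sup>2 * x\<^sup>2 - 2 * G * e * u * x + e\<^sup>2 * u\<^sup>2 + G * d0 * y\<^sup>2 - w\<^sup>2 * d0"

text \<open>So the ellipse lies in the closed disk and meets the circle only on the chord line.\<close>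
lemma ell_quad_eq: "ell_quad x y = G * (d0 * (x\<^sup>2 + y\<^sup>2 - 1) + e * (x - u)\<^sup>2)"
proof -
  have "u\<^sup>2 = 1 - s\<^sup>2" using u_s by simp
  thus ?thesis unfolding ell_quad_def G_def w_sq by algebra
qed

lemma G_closing_disc:
  "G * closing_disc (\<omega> * Complex u p) (\<omega> * Complex u q) z = ell_quad (Re (z * cnj \<omega>)) (Im (z * cnj \<omega>))"
proof -
  define x where "x = Re (z * cnj \<omega>)"
  define y where "y = Im (z * cnj \<omega>)"
  have s2: "s\<^sup>2 = 1 - u\<^sup>2" using u_s by simp
  have "closing_disc (\<omega> * Complex u p) (\<omega> * Complex u q) z = closing_disc (Complex u p) (Complex u q) (Complex x y)"
    using closing_disc_rotate[OF norm_\<omega>] unit_frame_coords[OF norm_\<omega>, of z] x_def y_def by metis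
  also have "G * \<dots> = ell_quad x y"
    unfolding closing_disc_vertical ell_quad_def G_def d0_def e_def w_def s2 by algebra
  finally show ?thesis by (simp add: x_def y_def)
qed

end


lemma chord_frame_of_labels:
  assumes P: "P \<in> KD" and Q: "Q \<in> KD" and chord: "chord_ends P Q (circpt t1) (circpt t2)"
    and lab12: "frac (t1 - t2) \<in> {0<..1/2}"
    and mid3: "frac (2 * t3 - (t1 + t2)) = 0"
    and lab3: "frac (t3 - t2) \<in> {0<..1/2}"
    and t4: "t4 = t3 + 1/4"
  obtains u s p q where "chord_frame (circpt t3) u s p q"
    "circpt t1 = circpt t3 * Complex u s" "circpt t2 = circpt t3 * Complex u (- s)"
    "circpt t4 = circpt t3 * \<i>" "P = circpt t3 * Complex u p" "Q = circpt t3 * Complex u q"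
proof -
  obtain d where d: "0 < d" "d \<le> 1/2" and c1: "circpt t1 = circpt t3 * cis (pi * d)"
    and c2: "circpt t2 = circpt t3 * cis (- (pi * d))" and c4: "circpt t4 = circpt t3 * \<i>"
    using circpt_chord_labels[OF lab12 mid3 lab3 t4] .
  define u s where "u = cos (pi * d)" and "s = sin (pi * d)"
  have s: "0 < s" using d by (simp add: s_def sin_gt_zero)
  have us: "u\<^sup>2 + s\<^sup>2 = 1" by (simp add: u_def s_def)
  have T1: "circpt t1 = circpt t3 * Complex u s" and T2: "circpt t2 = circpt t3 * Complex u (- s)"
    using c1 c2 by (simp_all add: u_def s_def cis.code)
  have "cmod (circpt t3) = 1" by (simp add: circpt_def)
  moreover have "cmod P < 1" "cmod Q < 1" using P Q by (auto simp: KD_def)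
  ultimately obtain p q where "chord_frame (circpt t3) u s p q"
    "P = circpt t3 * Complex u p" "Q = circpt t3 * Complex u q"
    using chord_frame_of_chord_ends[OF _ s us] chord T1 T2 by metis
  thus ?thesis using that T1 T2 c4 by blast
qed

locale ellipse_frame = chord_frame +
  fixes k A B C :: real
  assumes k_eq: "k = exp (kdist (\<omega> * Complex u p) (\<omega> * Complex u q))"
    and A_eq: "A = 2 * k * (k\<^sup>2 + 1) * (1 - u\<^sup>2) / ((k\<^sup>2 - 2*k*u + 1) * (k\<^sup>2 + 2*k*u + 1))"
    and B_eq: "B = (k\<^sup>2 + 1) * sqrt (1 - u\<^sup>2) / sqrt ((k\<^sup>2 - 2*k*u + 1) * (k\<^sup>2 + 2*k*u + 1))"
    and C_eq: "C = (k\<^sup>2 - 1)\<^sup>2 * u / ((k\<^sup>2 - 2*k*u + 1) * (k\<^sup>2 + 2*k*u + 1))"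
begin

text \<open>\<open>k\<^sup>2\<close> is the cross ratio \<open>n/m\<close> of the chord or its inverse; all the ellipse data are
  symmetric in m and n.\<close>
lemma k_sq_cross_ratio:
  obtains m n where "k\<^sup>2 * m = n" "m * n = d0" "n + m = 2 * w" "(n - m)\<^sup>2 = 4 * s\<^sup>2 * e"
    "0 < m" "0 < n"
proof -
  define n where "n = (s - q) * (s + p)"
  define m where "m = (s - p) * (s + q)"
  have pos: "0 < m" "0 < n" using p_lt q_lt by (auto simp: n_def m_def abs_less_iff)
  have sym: "m * n = d0" "n + m = 2 * w" "(n - m)\<^sup>2 = 4 * s\<^sup>2 * e"
    by (simp_all add: m_def n_def d0_def w_def e_def power2_eq_square algebra_simps)
  have k2: "k\<^sup>2 = exp \<bar>ln (n / m)\<bar>"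
    unfolding k_eq kdist_frame exp_double[symmetric] by (simp add: n_def m_def)
  have "k\<^sup>2 * m = n \<or> k\<^sup>2 * n = m"
  proof (cases "ln (n / m) \<ge> 0")
    case True
    hence "k\<^sup>2 = n / m" using k2 pos by simp
    thus ?thesis using pos by simp
  next
    case False
    hence "k\<^sup>2 = inverse (n / m)" using k2 pos by (simp add: exp_minus)
    thus ?thesis using pos by (simp add: field_simps)
  qed
  thus ?thesis
  proof
    assume "k\<^sup>2 * n = m"
    thus ?thesis using that[of n m] sym pos by (simp add: mult.commute power2_commute add.commute)
  qed (use that sym pos in blast)
qed

lemma ellipse_coeffs: "A\<^sup>2 = w\<^sup>2 * d0 / G\<^sup>2" "B\<^sup>2 = w\<^sup>2 / G" "C = e * u / G" "A > 0" "B > 0"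
proof -
  obtain m n where km: "k\<^sup>2 * m = n" and mn: "m * n = d0" and nm: "n + m = 2 * w"
    and nm2: "(n - m)\<^sup>2 = 4 * s\<^sup>2 * e" and m: "0 < m" and n: "0 < n"
    by (rule k_sq_cross_ratio)
  define den where "den = (k\<^sup>2 - 2*k*u + 1) * (k\<^sup>2 + 2*k*u + 1)"
  have k: "k > 0" using k_eq by simp
  have w_half: "w = (n + m) / 2" using nm by simp
  have u1: "1 - u\<^sup>2 = s\<^sup>2" using u_s by simp
  have "den * m\<^sup>2 = (n + m)\<^sup>2 - 4 * (m * n) * u\<^sup>2"
    unfolding den_def km[symmetric] by (simp add: algebra_simps power2_eq_square)
  also have "\<dots> = 4 * s\<^sup>2 * G"
    unfolding nm mn G_def using w_sq u_s by algebra
  finally have den: "den = 4 * s\<^sup>2 * G / m\<^sup>2" using m by (simp add: field_simps)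
  have den_pos: "den > 0" unfolding den using s_pos G_pos m by simp
  have A: "A = k * (k\<^sup>2 + 1) * m\<^sup>2 / (2 * G)"
    unfolding A_eq den_def[symmetric] den u1 using s_pos G_pos m by (simp add: field_simps power2_eq_square)
  show "A > 0" unfolding A using k G_pos m by (simp add: add_nonneg_pos)
  have "A\<^sup>2 = (k\<^sup>2 * m) * m * (k\<^sup>2 * m + m)\<^sup>2 / (4 * G\<^sup>2)"
    unfolding A by (simp add: field_simps power2_eq_square)
  also have "\<dots> = w\<^sup>2 * d0 / G\<^sup>2" unfolding km mn[symmetric] w_half
    by (simp add: field_simps power2_eq_square)
  finally show "A\<^sup>2 = w\<^sup>2 * d0 / G\<^sup>2" .
  have B: "B = (k\<^sup>2 + 1) * s / sqrt den" using s_pos unfolding B_eq den_def[symmetric] u1 by simp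
  show "B > 0" unfolding B using s_pos den_pos by (simp add: add_nonneg_pos)
  have "B\<^sup>2 = (k\<^sup>2 * m + m)\<^sup>2 / (4 * G)"
    unfolding B using den_pos s_pos m G_pos by (simp add: den power_divide field_simps power2_eq_square)
  also have "\<dots> = w\<^sup>2 / G" unfolding km w_half by (simp add: field_simps power2_eq_square)
  finally show "B\<^sup>2 = w\<^sup>2 / G" .
  have "C = (k\<^sup>2 * m - m)\<^sup>2 * u / (4 * s\<^sup>2 * G)"
    unfolding C_eq den_def[symmetric] den using s_pos m G_pos by (simp add: field_simps power2_eq_square)
  also have "\<dots> = e * u / G" unfolding km nm2 using s_pos by (simp add: field_simps)
  finally show "C = e * u / G" .
qed

lemma ellF_minus_1: "w\<^sup>2 * d0 * (ellF A B C \<omega> (\<omega> * \<i>) z - 1) = ell_quad (Re (z * cnj \<omega>)) (Im (z * cnj \<omega>))"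
proof -
  define x where "x = Re (z * cnj \<omega>)"
  define y where "y = Im (z * cnj \<omega>)"
  have "w\<^sup>2 * d0 * (ellF A B C \<omega> (\<omega> * \<i>) z - 1) = (G * x - G * C)\<^sup>2 + G * d0 * y\<^sup>2 - w\<^sup>2 * d0"
    unfolding ellF_unit_frame x_def[symmetric] y_def[symmetric] ellipse_coeffs(1,2)
    using G_pos d0_pos w_pos by (simp add: field_simps power2_eq_square)
  also have "G * C = e * u" using G_pos by (simp add: ellipse_coeffs(3))
  also have "(G * x - e * u)\<^sup>2 + G * d0 * y\<^sup>2 - w\<^sup>2 * d0 = ell_quad x y"
    by (simp add: ell_quad_def power2_eq_square algebra_simps)
  finally show ?thesis by (simp only: x_def y_def)
qed

lemma ellipse_subset_cball: "{z. ellF A B C \<omega> (\<omega> * \<i>) z = 1} \<subseteq> cball 0 1"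
proof
  fix z assume "z \<in> {z. ellF A B C \<omega> (\<omega> * \<i>) z = 1}"
  hence F: "ellF A B C \<omega> (\<omega> * \<i>) z = 1" by simp
  define x where "x = Re (z * cnj \<omega>)"
  define y where "y = Im (z * cnj \<omega>)"
  have "G * (d0 * (x\<^sup>2 + y\<^sup>2 - 1) + e * (x - u)\<^sup>2) = 0"
    using ellF_minus_1[of z] F by (simp add: ell_quad_eq x_def y_def)
  hence "d0 * (x\<^sup>2 + y\<^sup>2 - 1) = - e * (x - u)\<^sup>2" using G_pos by simp
  moreover have "e * (x - u)\<^sup>2 \<ge> 0" by (simp add: e_def)
  ultimately have "d0 * (x\<^sup>2 + y\<^sup>2 - 1) \<le> 0" by linarith
  hence "x\<^sup>2 + y\<^sup>2 \<le> 1" using d0_pos by (simp add: mult_le_0_iff)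
  moreover have "cmod z = sqrt (x\<^sup>2 + y\<^sup>2)"
    using unit_frame_coords[OF norm_\<omega>, of z] norm_unit_frame[OF norm_\<omega>] by (metis x_def y_def)
  ultimately show "z \<in> cball 0 1" by simp
qed

lemma ellF_chord_end:
  assumes "y\<^sup>2 = s\<^sup>2"
  shows "ellF A B C \<omega> (\<omega> * \<i>) (\<omega> * Complex u y) = 1"
proof -
  have c: "\<omega> * Complex u y * cnj \<omega> = Complex u y"
    using norm_eq_1_mult_cnj[OF norm_\<omega>] by (simp add: algebra_simps)
  have "w\<^sup>2 * d0 * (ellF A B C \<omega> (\<omega> * \<i>) (\<omega> * Complex u y) - 1) = ell_quad u y"
    using ellF_minus_1[of "\<omega> * Complex u y", unfolded c] by simp
  also have "\<dots> = 0" using assms u_s by (simp add: ell_quad_eq)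
  finally show ?thesis using w_pos d0_pos by simp
qed

lemma ellF_tangent_chord_end:
  "\<exists>c. c \<noteq> 0 \<and> (ellF A B C \<omega> (\<omega> * \<i>) has_derivative (\<lambda>h. c * ((\<omega> * Complex u y) \<bullet> h)))
    (at (\<omega> * Complex u y))"
proof -
  have "u - C = u * d0 / G" using G_pos by (simp add: ellipse_coeffs(3) G_def field_simps)
  hence "(u - C) / A\<^sup>2 = (u * d0 / G) / (w\<^sup>2 * d0 / G\<^sup>2)" by (simp only: ellipse_coeffs(1))
  also have "\<dots> = u / (w\<^sup>2 / G)" using G_pos d0_pos by (simp add: field_simps power2_eq_square)
  finally have "(u - C) / A\<^sup>2 = u / B\<^sup>2" by (simp only: ellipse_coeffs(2))
  thus ?thesis
    using ellF_has_derivative_radial[OF _ norm_\<omega>] ellipse_coeffs(5) by (intro exI[of _ "2 / B\<^sup>2"]) simp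
qed

lemma closing_disc_sign:
  fixes R :: complex
  defines "F \<equiv> ellF A B C \<omega> (\<omega> * \<i>) R" and "\<Delta> \<equiv> closing_disc (\<omega> * Complex u p) (\<omega> * Complex u q) R"
  shows "\<Delta> < 0 \<longleftrightarrow> F < 1" and "\<Delta> = 0 \<longleftrightarrow> F = 1" and "\<Delta> > 0 \<longleftrightarrow> F > 1"
proof -
  have "sgn (w\<^sup>2 * d0) * sgn (F - 1) = sgn G * sgn \<Delta>"
    unfolding sgn_mult[symmetric] F_def \<Delta>_def ellF_minus_1 G_closing_disc ..
  hence sgn: "sgn (F - 1) = sgn \<Delta>" using w_pos d0_pos G_pos by simp
  show "\<Delta> < 0 \<longleftrightarrow> F < 1" using sgn_less[of \<Delta>] sgn_less[of "F - 1"] sgn by simp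
  show "\<Delta> = 0 \<longleftrightarrow> F = 1" using sgn_0_0[of \<Delta>] sgn_0_0[of "F - 1"] sgn by simp
  show "\<Delta> > 0 \<longleftrightarrow> F > 1" using sgn_greater[of \<Delta>] sgn_greater[of "F - 1"] sgn by simp
qed

end

theorem theorem3p3:
  fixes P Q R :: complex and t1 t2 t3 t4 u k A B C :: real
    and E \<Phi> :: "complex set"
  assumes PD: "P \<in> KD" and QD: "Q \<in> KD" and RD: "R \<in> KD"
    and ncol: "\<not> collinear {P, Q, R}"
    and chord: "chord_ends P Q (circpt t1) (circpt t2)"
    and lab12: "frac (t1 - t2) \<in> {0<..1/2}"
    and mid3: "frac (2 * t3 - (t1 + t2)) = 0"
    and lab3: "frac (t3 - t2) \<in> {0<..1/2}"
    and t4: "t4 = t3 + 1/4"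
    and u: "u = P \<bullet> circpt t3"
    and k: "k = exp (kdist P Q)"
    and A: "A = 2 * k * (k\<^sup>2 + 1) * (1 - u\<^sup>2) / ((k\<^sup>2 - 2*k*u + 1) * (k\<^sup>2 + 2*k*u + 1))"
    and B: "B = (k\<^sup>2 + 1) * sqrt (1 - u\<^sup>2) / sqrt ((k\<^sup>2 - 2*k*u + 1) * (k\<^sup>2 + 2*k*u + 1))"
    and C: "C = (k\<^sup>2 - 1)\<^sup>2 * u / ((k\<^sup>2 - 2*k*u + 1) * (k\<^sup>2 + 2*k*u + 1))"
    and E: "E = {z. ellF A B C (circpt t3) (circpt t4) z = 1}"
    and \<Phi>: "\<Phi> = {z. ellF A B C (circpt t3) (circpt t4) z < 1}"
  shows "Q \<bullet> circpt t3 = u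
    \<and> E \<subseteq> KD \<union> S1
    \<and> circpt t1 \<in> E \<and> circpt t2 \<in> E
    \<and> (\<exists>c. c \<noteq> 0 \<and> (ellF A B C (circpt t3) (circpt t4) has_derivative (\<lambda>h. c * (circpt t1 \<bullet> h))) (at (circpt t1)))
    \<and> (\<exists>c. c \<noteq> 0 \<and> (ellF A B C (circpt t3) (circpt t4) has_derivative (\<lambda>h. c * (circpt t2 \<bullet> h))) (at (circpt t2)))
    \<and> (R \<in> \<Phi> \<longrightarrow> {V. circ_tri P Q R V} = {})
    \<and> (R \<in> E \<longrightarrow> finite {V. circ_tri P Q R V} \<and> card {V. circ_tri P Q R V} = 1)
    \<and> (R \<in> KD - closure \<Phi> \<longrightarrow> finite {V. circ_tri P Q R V} \<and> card {V. circ_tri P Q R V} = 2)"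
proof -
  obtain u' s p q where frame: "chord_frame (circpt t3) u' s p q"
    and T1: "circpt t1 = circpt t3 * Complex u' s" and T2: "circpt t2 = circpt t3 * Complex u' (- s)"
    and T4: "circpt t4 = circpt t3 * \<i>"
    and P: "P = circpt t3 * Complex u' p" and Q: "Q = circpt t3 * Complex u' q"
    using chord_frame_of_labels[OF PD QD chord lab12 mid3 lab3 t4] .
  have coord: "(circpt t3 * Complex u' y) \<bullet> circpt t3 = u'" for y
    using norm_eq_1_mult_cnj[of "circpt t3"] by (simp add: circpt_def inner_unit_frame algebra_simps)
  hence "u' = u" using u P by simp
  note frame = frame[unfolded this] and T1 = T1[unfolded this] and T2 = T2[unfolded this]
    and P = P[unfolded this] and Q = Q[unfolded this] and coord = coord[unfolded this]
  interpret ellipse_frame "circpt t3" u s p q k A B C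
    using frame k A B C P Q by (simp add: ellipse_frame_def ellipse_frame_axioms_def)
  have norms: "cmod P < 1" "cmod Q < 1" "cmod R < 1" using PD QD RD by (auto simp: KD_def)
  note count = card_circ_tri_by_closing_disc[OF norms chord]
  note sign = closing_disc_sign[of R, folded P Q]
  note E = E[unfolded T4] and \<Phi> = \<Phi>[unfolded T4]
  have "E \<subseteq> KD \<union> S1" using ellipse_subset_cball E by (auto simp: KD_def S1_def)
  moreover have "circpt t1 \<in> E" "circpt t2 \<in> E"
    using ellF_chord_end[of s] ellF_chord_end[of "- s"] E T1 T2 by simp_all
  moreover have "R \<in> KD - closure \<Phi> \<Longrightarrow> ellF A B C (circpt t3) (circpt t3 * \<i>) R > 1"
    using ellF_level_in_closure[OF norm_\<omega>, of A B C R] \<Phi> closure_subset[of \<Phi>] by force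
  moreover have "Q \<bullet> circpt t3 = u" using coord Q by simp
  ultimately show ?thesis
    unfolding T4 using ellF_tangent_chord_end[of s] ellF_tangent_chord_end[of "- s"] T1 T2
      count sign E \<Phi> by simp
qed

end
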